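(* Let $n\ge 2$, $d\ge 1$, $\tau>0$, $\sigma>0$. Let $\mu^\star_1,\mu^\star_2\stackrel{\mathrm{i.i.d.}}{\sim}\mathcal N(0,\tau^2 I_d)$ and $\xi_1,\dots,\xi_n\stackrel{\mathrm{i.i.d.}}{\sim}\mathcal N(0,\sigma^2 I_d)$, with the centers independent of the noise. Let $z^\star_1,\dots,z^\star_n\in\{1,2\}$ be fixed labels such that both classes $S^\star_\ell=\{i: z^\star_i=\ell\}$ are nonempty, and set $x_i=\mu^\star_{z^\star_i}+\xi_i$. Let $\{C_1,C_2\}$ be a fixed partition of $[n]$ into two nonempty sets, with centroids $\widehat\mu_j=|C_j|^{-1}\sum_{k\in C_j}x_k$. Fix $i\in[n]$, let $j$ be such that $i\in C_j$, let $\overline{j}$ be the other index in $\{1,2\}$, and let $\ell$ be such that $i\in S^\star_\ell$. Then $$\|x_i-\widehat\mu_{\overline j}\|^2\sim \alpha\,\chi^2_d,\qquad \alpha=2\tau^2(1-R^\ell_{\overline j})^2+\Bigl(1+\tfrac{1}{|C_{\overline j}|}\Bigr)\sigma^2,$$ where $R^\ell_{\overline j}=|C_{\overline j}\cap S^\star_\ell|/|C_{\overline j}|$.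
   Context: $[n]=\{1,\dots,n\}$. For $a>0$, "$Y\sim a\chi^2_d$" means $Y/a$ is chi-squared with $d$ degrees of freedom. Randomness is only over the centers and noise; labels and partition are deterministic. *)

theory Defs
  imports "HOL-Probability.Probability"
begin

definition chi2_density :: "nat \<Rightarrow> real \<Rightarrow> real" where
  "chi2_density k x =
     (if 0 < x then x powr (real k / 2 - 1) * exp (- x / 2)
                    / (2 powr (real k / 2) * Gamma (real k / 2))
      else 0)"

definition scaled_chi2_distributed ::
  "'a measure \<Rightarrow> ('a \<Rightarrow> real) \<Rightarrow> real \<Rightarrow> nat \<Rightarrow> bool" where
  "scaled_chi2_distributed M Y a k \<longleftrightarrow>
     distributed M lborel (\<lambda>\<omega>. Y \<omega> / a) (\<lambda>x. ennreal (chi2_density k x))"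

definition obs ::
  "(nat \<Rightarrow> 'a \<Rightarrow> real^'d) \<Rightarrow> (nat \<Rightarrow> 'a \<Rightarrow> real^'d) \<Rightarrow> (nat \<Rightarrow> nat) \<Rightarrow> nat \<Rightarrow> 'a \<Rightarrow> real^'d" where
  "obs mu xi z k \<omega> = mu (z k) \<omega> + xi k \<omega>"

definition centroid ::
  "(nat \<Rightarrow> 'a \<Rightarrow> real^'d) \<Rightarrow> (nat \<Rightarrow> 'a \<Rightarrow> real^'d) \<Rightarrow> (nat \<Rightarrow> nat) \<Rightarrow> nat set \<Rightarrow> 'a \<Rightarrow> real^'d" where
  "centroid mu xi z C \<omega> = (1 / real (card C)) *\<^sub>R (\<Sum>k\<in>C. obs mu xi z k \<omega>)"

end

theory Submission
  imports Defs
begin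

text \<open>
  Each coordinate of x_i minus the centroid of the opposite cluster C is one fixed linear
  combination of the independent centred Gaussians mu_1, mu_2, xi_1, ..., xi_n: as i is not in C,
  it is (1 - R)(mu_l - mu_l') + xi_i - |C|^-1 sum_{k in C} xi_k, whose variance is alpha. So the
  d coordinates are i.i.d. N(0, alpha), and the squared norm divided by alpha is a sum of d
  independent squared standard normals. Such a sum is chi^2_d: a squared standard normal has
  density chi^2_1 (substitute t = x^2), and chi^2_a * chi^2_b = chi^2_(a+b) because, after the
  substitution y = x t, the convolution integrand factors into chi^2_(a+b)(x) times a Beta kernel.
\<close>

section \<open>Chi-squared densities\<close>

definition chi2_const :: "nat \<Rightarrow> real" where
  "chi2_const k = 2 powr (real k / 2) * Gamma (real k / 2)"

lemma chi2_const_pos: "0 < k \<Longrightarrow> 0 < chi2_const k"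
  by (simp add: chi2_const_def Gamma_real_pos)

lemma chi2_density_pos:
  "0 < x \<Longrightarrow> chi2_density k x = x powr (real k / 2 - 1) * exp (- x / 2) / chi2_const k"
  by (simp add: chi2_density_def chi2_const_def)

lemma chi2_density_nonpos: "x \<le> 0 \<Longrightarrow> chi2_density k x = 0"
  by (simp add: chi2_density_def)

lemma chi2_density_nonneg [simp]: "0 \<le> chi2_density k x"
  by (cases "k = 0") (auto simp: chi2_density_def intro!: divide_nonneg_pos Gamma_real_pos)

lemma borel_measurable_chi2_density [measurable]: "chi2_density k \<in> borel_measurable borel"
  unfolding chi2_density_def by measurable

lemma chi2_density_convolution_integrand:
  assumes "0 < a" "0 < b" "0 < x" "0 < t" "t < 1"
  shows "x * (chi2_density a (x - x * t) * chi2_density b (x * t)) =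
    chi2_const (a + b) / (chi2_const a * chi2_const b) * chi2_density (a + b) x *
    ((1 - t) powr (real a / 2 - 1) * t powr (real b / 2 - 1))"
proof -
  define p q where "p = real a / 2 - 1" and "q = real b / 2 - 1"
  have "x - x * t = x * (1 - t)" by (simp add: algebra_simps)
  then have dens_a:
    "chi2_density a (x - x * t) = x powr p * (1 - t) powr p * exp (- (x * (1 - t)) / 2) / chi2_const a"
    using assms by (simp add: chi2_density_pos powr_mult p_def)
  have dens_b: "chi2_density b (x * t) = x powr q * t powr q * exp (- (x * t) / 2) / chi2_const b"
    using assms by (simp add: chi2_density_pos powr_mult q_def)
  have "x powr (real (a + b) / 2 - 1) = x powr (p + q + 1)"
    by (rule arg_cong[where f = "(powr) x"]) (simp add: p_def q_def field_simps)
  then have dens_ab: "chi2_density (a + b) x = x powr p * x powr q * x * exp (- x / 2) / chi2_const (a + b)"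
    using assms by (simp only: chi2_density_pos powr_add powr_one)
  have "exp (- (x * (1 - t)) / 2) * exp (- (x * t) / 2) = exp (- x / 2)"
    by (simp add: exp_add[symmetric] algebra_simps add_divide_distrib[symmetric])
  then show ?thesis
    using chi2_const_pos[of a] chi2_const_pos[of b] chi2_const_pos[of "a + b"] assms
    unfolding dens_a dens_b dens_ab p_def[symmetric] q_def[symmetric] by (simp add: field_simps)
qed

lemma nn_integral_chi2_density:
  assumes "0 < k"
  shows "(\<integral>\<^sup>+x. ennreal (chi2_density k x) \<partial>lborel) = 1"
proof -
  define s where "s = real k / 2"
  have s: "0 < s" and G: "0 < Gamma s" using assms by (simp_all add: s_def Gamma_real_pos)
  have "(\<integral>\<^sup>+x. ennreal (chi2_density k x) \<partial>lborel) =
        (\<integral>\<^sup>+x. ennreal (2 * chi2_density k (0 + 2 * x)) \<partial>lborel)"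
    by (subst nn_integral_real_affine[where c = 2 and t = 0])
       (auto simp: nn_integral_cmult[symmetric] ennreal_mult)
  also have "\<dots> = (\<integral>\<^sup>+x. ennreal (1 / Gamma s) *
      ennreal (indicator {0..} x * x powr (s - 1) / exp x) \<partial>lborel)"
  proof (rule nn_integral_cong)
    fix x :: real
    have "2 * chi2_density k (0 + 2 * x) = 1 / Gamma s * (indicator {0..} x * x powr (s - 1) / exp x)"
      using G by (auto simp: chi2_density_def s_def[symmetric] indicator_def
        powr_mult exp_minus field_simps powr_diff)
    then show "ennreal (2 * chi2_density k (0 + 2 * x)) =
        ennreal (1 / Gamma s) * ennreal (indicator {0..} x * x powr (s - 1) / exp x)"
      using G by (simp add: ennreal_mult'[symmetric])
  qed
  also have "\<dots> = ennreal (1 / Gamma s) * ennreal (Gamma s)"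
    by (subst nn_integral_cmult) (simp_all add: Gamma_conv_nn_integral_real[OF s])
  also have "\<dots> = 1" using G by (simp add: ennreal_mult'[symmetric])
  finally show ?thesis .
qed

lemma prob_space_chi2_density:
  "0 < k \<Longrightarrow> prob_space (density lborel (\<lambda>x. ennreal (chi2_density k x)))"
  by (rule prob_spaceI) (simp add: emeasure_density nn_integral_chi2_density)

lemma convolution_chi2_density_proportional:
  assumes "0 < a" "0 < b"
  shows "(\<integral>\<^sup>+y. ennreal (chi2_density a (x - y)) * ennreal (chi2_density b y) \<partial>lborel) =
    ennreal (chi2_const (a + b) / (chi2_const a * chi2_const b)) *
    (\<integral>\<^sup>+t. ennreal ((1 - t) powr (real a / 2 - 1) * t powr (real b / 2 - 1)) *
      indicator {0<..<1} t \<partial>lborel) *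
    ennreal (chi2_density (a + b) x)"
    (is "_ = ennreal ?K * ?J * _")
proof (cases "0 < x")
  case True
  let ?g = "\<lambda>t. (1 - t) powr (real a / 2 - 1) * t powr (real b / 2 - 1)"
  have K: "0 \<le> ?K"
    using assms by (simp add: chi2_const_pos less_imp_le)
  have "(\<integral>\<^sup>+y. ennreal (chi2_density a (x - y)) * ennreal (chi2_density b y) \<partial>lborel) =
      ennreal x * (\<integral>\<^sup>+t. ennreal (chi2_density a (x - x * t) * chi2_density b (x * t)) \<partial>lborel)"
    using True by (subst nn_integral_real_affine[where c = x and t = 0]) (auto simp: ennreal_mult')
  also have "\<dots> = (\<integral>\<^sup>+t. ennreal (?K * chi2_density (a + b) x) *
      (ennreal (?g t) * indicator {0<..<1} t) \<partial>lborel)"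
  proof (subst nn_integral_cmult[symmetric], simp, intro nn_integral_cong)
    fix t :: real
    consider "t \<le> 0" | "0 < t" "t < 1" | "1 \<le> t" by linarith
    then show "ennreal x * ennreal (chi2_density a (x - x * t) * chi2_density b (x * t)) =
        ennreal (?K * chi2_density (a + b) x) * (ennreal (?g t) * indicator {0<..<1} t)"
    proof cases
      case 2
      have "ennreal x * ennreal (chi2_density a (x - x * t) * chi2_density b (x * t)) =
          ennreal (x * (chi2_density a (x - x * t) * chi2_density b (x * t)))"
        using True by (simp add: ennreal_mult')
      also have "\<dots> = ennreal (?K * chi2_density (a + b) x) * ennreal (?g t)"
        unfolding chi2_density_convolution_integrand[OF assms True 2] using K
        by (intro ennreal_mult' mult_nonneg_nonneg chi2_density_nonneg)
      finally show ?thesis using 2 by simp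
    qed (use True in \<open>auto simp: chi2_density_nonpos mult_nonneg_nonpos mult_le_cancel_left1\<close>)
  qed
  also have "\<dots> = ennreal (?K * chi2_density (a + b) x) * ?J"
    by (subst nn_integral_cmult) auto
  also have "\<dots> = ennreal ?K * ?J * ennreal (chi2_density (a + b) x)"
    by (subst ennreal_mult'[OF K]) (simp add: mult_ac)
  finally show ?thesis .
next
  case False
  then have "chi2_density a (x - y) = 0 \<or> chi2_density b y = 0" for y
    by (cases "0 < y") (simp_all add: chi2_density_nonpos)
  then have "(\<integral>\<^sup>+y. ennreal (chi2_density a (x - y)) * ennreal (chi2_density b y) \<partial>lborel) = 0"
    by (intro nn_integral_zero') auto
  with False show ?thesis by (simp add: chi2_density_nonpos)
qed

text \<open>The Beta integral is never evaluated: the convolution of two probability densities has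
  total mass 1, which pins down the constant.\<close>

lemma convolution_chi2_density:
  assumes "0 < a" "0 < b"
  shows "(\<lambda>x. \<integral>\<^sup>+y. ennreal (chi2_density a (x - y)) * ennreal (chi2_density b y) \<partial>lborel) =
    (\<lambda>x. ennreal (chi2_density (a + b) x))"
    (is "?conv = _")
proof -
  obtain c where c: "\<And>x. ?conv x = c * ennreal (chi2_density (a + b) x)"
    using convolution_chi2_density_proportional[OF assms] by blast
  have "prob_space (density lborel ?conv)"
    by (intro prob_space_convolution_density prob_space_chi2_density assms) auto
  then have "1 = (\<integral>\<^sup>+x. ?conv x \<partial>lborel)"
    by (auto dest!: prob_space.emeasure_space_1 simp: emeasure_density)
  also have "\<dots> = c"
    using assms by (simp add: c nn_integral_cmult nn_integral_chi2_density)
  finally show ?thesis by (simp add: c[abs_def])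
qed

section \<open>Squares of standard normals\<close>

lemma chi2_density_1_square:
  assumes "0 < x"
  shows "chi2_density 1 (x\<^sup>2) * (2 * x) = 2 * std_normal_density x"
proof -
  have p: "(x\<^sup>2) powr (1 / 2 - 1) = 1 / x"
  proof -
    have "(x\<^sup>2) powr (1 / 2 - 1) = (x\<^sup>2) powr (- (1 / 2))" by simp
    also have "\<dots> = inverse (sqrt (x\<^sup>2))" using assms by (simp add: powr_minus powr_half_sqrt)
    also have "\<dots> = 1 / x" using assms by (simp add: divide_inverse)
    finally show ?thesis .
  qed
  have s: "sqrt (2 * pi) = sqrt 2 * sqrt pi" by (simp add: real_sqrt_mult)
  show ?thesis
    using assms
    by (simp add: chi2_density_def Gamma_one_half_real powr_half_sqrt std_normal_density_def)
       (simp add: p[simplified] s field_simps real_sqrt_mult)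
qed

lemma nn_integral_even:
  fixes f :: "real \<Rightarrow> ennreal"
  assumes [measurable]: "f \<in> borel_measurable borel" and even: "\<And>x. f (- x) = f x"
  shows "(\<integral>\<^sup>+x. f x \<partial>lborel) = 2 * (\<integral>\<^sup>+x. f x * indicator {0<..} x \<partial>lborel)"
proof -
  have "(\<integral>\<^sup>+x. f x \<partial>lborel) =
      (\<integral>\<^sup>+x. f x * indicator {..0} x \<partial>lborel) + (\<integral>\<^sup>+x. f x * indicator {0<..} x \<partial>lborel)"
    by (subst nn_integral_add[symmetric]) (auto intro!: nn_integral_cong split: split_indicator)
  also have "(\<integral>\<^sup>+x. f x * indicator {..0} x \<partial>lborel) = (\<integral>\<^sup>+x. f x * indicator {0..} x \<partial>lborel)"
    by (subst nn_integral_real_affine[where c = "-1" and t = 0])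
       (auto simp: even intro!: nn_integral_cong split: split_indicator)
  also have "\<dots> = (\<integral>\<^sup>+x. f x * indicator {0<..} x \<partial>lborel)"
    by (rule nn_integral_cong_AE, rule AE_mp[OF AE_lborel_singleton[of 0]])
       (auto split: split_indicator)
  finally show ?thesis by (simp add: mult_2)
qed

lemma nn_integral_atLeast_0_SUP:
  fixes f :: "real \<Rightarrow> ennreal" and h :: "nat \<Rightarrow> real"
  assumes [measurable]: "f \<in> borel_measurable borel"
    and "incseq h" and unbounded: "\<And>t. \<exists>n. t \<le> h n"
  shows "(\<integral>\<^sup>+x. f x * indicator {0..} x \<partial>lborel) = (SUP n. \<integral>\<^sup>+x. f x * indicator {0..h n} x \<partial>lborel)"
proof -
  have lim: "(SUP n. f x * indicator {0..h n} x) = f x * indicator {0..} x" for x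
  proof (rule antisym)
    show "(SUP n. f x * indicator {0..h n} x) \<le> f x * indicator {0..} x"
      by (rule SUP_least) (auto simp: indicator_def)
    obtain N where "x \<le> h N" using unbounded by blast
    then have "f x * indicator {0..} x = f x * indicator {0..h N} x" by (auto simp: indicator_def)
    also have "\<dots> \<le> (SUP n. f x * indicator {0..h n} x)" by (rule SUP_upper) simp
    finally show "f x * indicator {0..} x \<le> (SUP n. f x * indicator {0..h n} x)" .
  qed
  have "incseq (\<lambda>n x. f x * indicator {0..h n} x)"
    using \<open>incseq h\<close> by (auto simp: incseq_def le_fun_def indicator_def intro: order_trans)
  then show ?thesis
    unfolding lim[symmetric] by (rule nn_integral_monotone_convergence_SUP) measurable
qed

lemma nn_integral_square_substitution:
  fixes f :: "real \<Rightarrow> real"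
  assumes [measurable]: "f \<in> borel_measurable borel"
  shows "(\<integral>\<^sup>+x. ennreal (f (x\<^sup>2) * (2 * x)) * indicator {0..} x \<partial>lborel) =
    (\<integral>\<^sup>+t. ennreal (f t) * indicator {0..} t \<partial>lborel)"
proof -
  have "(\<integral>\<^sup>+x. ennreal (f (x\<^sup>2) * (2 * x)) * indicator {0..} x \<partial>lborel) =
      (SUP n. \<integral>\<^sup>+x. ennreal (f (x\<^sup>2) * (2 * x)) * indicator {0..real n} x \<partial>lborel)"
    by (rule nn_integral_atLeast_0_SUP) (auto simp: incseq_def intro: real_arch_simple)
  also have "\<dots> = (SUP n. \<integral>\<^sup>+t. ennreal (f t) * indicator {0..(real n)\<^sup>2} t \<partial>lborel)"
  proof (rule SUP_cong[OF refl])
    fix n :: nat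
    have "(\<integral>\<^sup>+t. ennreal (f t) * indicator {0..(real n)\<^sup>2} t \<partial>lborel) =
        (\<integral>\<^sup>+t. ennreal (f t * indicator {0\<^sup>2..(real n)\<^sup>2} t) \<partial>lborel)"
      by (auto intro!: nn_integral_cong split: split_indicator)
    also have "\<dots> = (\<integral>\<^sup>+x. ennreal (f (x\<^sup>2) * (2 * x) * indicator {0..real n} x) \<partial>lborel)"
      by (rule nn_integral_substitution[where g' = "\<lambda>x. 2 * x"])
         (auto simp: set_borel_measurable_def intro!: derivative_eq_intros continuous_intros)
    finally show "(\<integral>\<^sup>+x. ennreal (f (x\<^sup>2) * (2 * x)) * indicator {0..real n} x \<partial>lborel) =
        (\<integral>\<^sup>+t. ennreal (f t) * indicator {0..(real n)\<^sup>2} t \<partial>lborel)"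
      by (auto intro!: nn_integral_cong split: split_indicator)
  qed
  also have "\<dots> = (\<integral>\<^sup>+t. ennreal (f t) * indicator {0..} t \<partial>lborel)"
  proof (rule nn_integral_atLeast_0_SUP[symmetric])
    show "incseq (\<lambda>n. (real n)\<^sup>2)" by (auto simp: incseq_def intro!: power_mono)
    fix t :: real
    obtain n :: nat where "t \<le> real n" using real_arch_simple by blast
    moreover have "real n \<le> (real n)\<^sup>2" by (cases n) (auto simp: power2_eq_square)
    ultimately show "\<exists>n. t \<le> (real n)\<^sup>2" by (meson order_trans)
  qed measurable
  finally show ?thesis .
qed

lemma nn_integral_std_normal_square:
  assumes [measurable]: "A \<in> sets borel"
  shows "(\<integral>\<^sup>+x. ennreal (std_normal_density x) * indicator A (x\<^sup>2) \<partial>lborel) =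
    (\<integral>\<^sup>+t. ennreal (chi2_density 1 t) * indicator A t \<partial>lborel)"
proof -
  define g where "g t = chi2_density 1 t * indicator A t" for t
  have [measurable]: "g \<in> borel_measurable borel" unfolding g_def by measurable
  have "(\<integral>\<^sup>+x. ennreal (std_normal_density x) * indicator A (x\<^sup>2) \<partial>lborel) =
      2 * (\<integral>\<^sup>+x. ennreal (std_normal_density x) * indicator A (x\<^sup>2) * indicator {0<..} x \<partial>lborel)"
    by (rule nn_integral_even) (auto simp: std_normal_density_def)
  also have "\<dots> = (\<integral>\<^sup>+x. ennreal (g (x\<^sup>2) * (2 * x)) * indicator {0..} x \<partial>lborel)"
  proof (subst nn_integral_cmult[symmetric], simp, intro nn_integral_cong)
    fix x :: real
    show "2 * (ennreal (std_normal_density x) * indicator A (x\<^sup>2) * indicator {0<..} x) =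
        ennreal (g (x\<^sup>2) * (2 * x)) * indicator {0..} x"
    proof (cases "0 < x")
      case True
      have g_sq: "g (x\<^sup>2) * (2 * x) = 2 * std_normal_density x * indicator A (x\<^sup>2)"
        unfolding g_def chi2_density_1_square[OF True, symmetric] by (simp add: mult_ac)
      have g: "ennreal (g (x\<^sup>2) * (2 * x)) = 2 * ennreal (std_normal_density x) * indicator A (x\<^sup>2)"
        unfolding g_sq by (simp add: ennreal_mult split: split_indicator)
      show ?thesis
        unfolding g using True by (simp add: mult_ac)
    qed (cases "x = 0", auto)
  qed
  also have "\<dots> = (\<integral>\<^sup>+t. ennreal (g t) * indicator {0..} t \<partial>lborel)"
    by (rule nn_integral_square_substitution) measurable
  also have "\<dots> = (\<integral>\<^sup>+t. ennreal (chi2_density 1 t) * indicator A t \<partial>lborel)"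
    by (auto intro!: nn_integral_cong simp: g_def chi2_density_nonpos split: split_indicator)
  finally show ?thesis .
qed

lemma (in prob_space) chi2_distributed_square:
  assumes X: "distributed M lborel X (\<lambda>x. ennreal (std_normal_density x))"
  shows "distributed M lborel (\<lambda>\<omega>. (X \<omega>)\<^sup>2) (\<lambda>x. ennreal (chi2_density 1 x))"
proof -
  let ?N = "density lborel (\<lambda>x. ennreal (std_normal_density x))"
  have [measurable]: "X \<in> borel_measurable M"
    using distributed_measurable[OF X] by simp
  have "distr M lborel (\<lambda>\<omega>. (X \<omega>)\<^sup>2) = distr ?N lborel (\<lambda>x. x\<^sup>2)"
    by (subst distributed_distr_eq_density[OF X, symmetric], subst distr_distr) (auto simp: comp_def)
  also have "\<dots> = density lborel (\<lambda>x. ennreal (chi2_density 1 x))"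
  proof (rule measure_eqI)
    fix A assume "A \<in> sets (distr ?N lborel (\<lambda>x. x\<^sup>2))"
    then have [measurable]: "A \<in> sets borel" by simp
    have "(\<lambda>x::real. x\<^sup>2) -` A \<in> sets lborel"
      using measurable_sets[of "\<lambda>x::real. x\<^sup>2" borel borel A] by simp
    then have "emeasure (distr ?N lborel (\<lambda>x. x\<^sup>2)) A =
        (\<integral>\<^sup>+x. ennreal (std_normal_density x) * indicator ((\<lambda>x. x\<^sup>2) -` A) x \<partial>lborel)"
      by (subst emeasure_distr) (auto simp: emeasure_density)
    also have "\<dots> = (\<integral>\<^sup>+x. ennreal (std_normal_density x) * indicator A (x\<^sup>2) \<partial>lborel)"
      by (auto intro!: nn_integral_cong split: split_indicator)
    also have "\<dots> = emeasure (density lborel (\<lambda>x. ennreal (chi2_density 1 x))) A"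
      by (simp add: nn_integral_std_normal_square emeasure_density)
    finally show "emeasure (distr ?N lborel (\<lambda>x. x\<^sup>2)) A =
        emeasure (density lborel (\<lambda>x. ennreal (chi2_density 1 x))) A" .
  qed simp
  finally show ?thesis
    unfolding distributed_def by simp
qed

lemma (in prob_space) chi2_distributed_sum_squares:
  assumes "finite F" "F \<noteq> {}" "indep_vars (\<lambda>_. borel) Z F"
    and "\<And>c. c \<in> F \<Longrightarrow> distributed M lborel (Z c) (\<lambda>x. ennreal (std_normal_density x))"
  shows "distributed M lborel (\<lambda>\<omega>. \<Sum>c\<in>F. (Z c \<omega>)\<^sup>2) (\<lambda>x. ennreal (chi2_density (card F) x))"
  using assms
proof (induct F rule: finite_ne_induct)
  case (singleton c)
  then show ?case using chi2_distributed_square[of "Z c"] by simp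
next
  case (insert c F)
  have "indep_vars (\<lambda>_. borel) (\<lambda>c \<omega>. (Z c \<omega>)\<^sup>2) (insert c F)"
    by (rule indep_vars_compose2[OF insert.prems(1)]) simp
  then have "indep_var borel (\<lambda>\<omega>. (Z c \<omega>)\<^sup>2) borel (\<lambda>\<omega>. \<Sum>c\<in>F. (Z c \<omega>)\<^sup>2)"
    using insert.hyps by (intro indep_vars_sum) auto
  moreover have "distributed M lborel (\<lambda>\<omega>. \<Sum>c\<in>F. (Z c \<omega>)\<^sup>2) (\<lambda>x. ennreal (chi2_density (card F) x))"
    using insert by (auto intro: indep_vars_subset)
  ultimately have "distributed M lborel (\<lambda>\<omega>. (Z c \<omega>)\<^sup>2 + (\<Sum>c\<in>F. (Z c \<omega>)\<^sup>2))
      (\<lambda>x. \<integral>\<^sup>+y. ennreal (chi2_density 1 (x - y)) * ennreal (chi2_density (card F) y) \<partial>lborel)"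
    using insert.prems by (intro distributed_convolution chi2_distributed_square) auto
  also have "(\<lambda>x. \<integral>\<^sup>+y. ennreal (chi2_density 1 (x - y)) * ennreal (chi2_density (card F) y) \<partial>lborel) =
      (\<lambda>x. ennreal (chi2_density (1 + card F) x))"
    using insert.hyps by (intro convolution_chi2_density) (auto simp: card_gt_0_iff)
  finally show ?case
    using insert.hyps by simp
qed

section \<open>Gaussian vectors with i.i.d. coordinates\<close>

lemma (in prob_space) normal_distributed_weighted_sum:
  assumes fin: "finite I" and indep: "indep_vars (\<lambda>_. borel) X I"
    and pos: "\<And>s. s \<in> I \<Longrightarrow> 0 < sd s"
    and normal: "\<And>s. s \<in> I \<Longrightarrow> distributed M lborel (X s) (\<lambda>x. ennreal (normal_density 0 (sd s) x))"
    and nonzero: "s' \<in> I" "w s' \<noteq> 0"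
  shows "distributed M lborel (\<lambda>\<omega>. \<Sum>s\<in>I. w s * X s \<omega>)
    (\<lambda>x. ennreal (normal_density 0 (sqrt (\<Sum>s\<in>I. (w s * sd s)\<^sup>2)) x))"
proof -
  define I' where "I' = {s\<in>I. w s \<noteq> 0}"
  have I': "finite I'" "I' \<noteq> {}" "I' \<subseteq> I"
    using fin nonzero by (auto simp: I'_def)
  have "distributed M lborel (\<lambda>\<omega>. w s * X s \<omega>) (\<lambda>x. ennreal (normal_density 0 (\<bar>w s\<bar> * sd s) x))"
    if "s \<in> I'" for s
    using normal_density_affine[OF normal[of s] pos[of s], of "w s" 0] that by (simp add: I'_def)
  moreover have "indep_vars (\<lambda>_. borel) (\<lambda>s \<omega>. w s * X s \<omega>) I'"
    by (rule indep_vars_compose2[OF indep_vars_subset[OF indep I'(3)]]) simp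
  ultimately have "distributed M lborel (\<lambda>\<omega>. \<Sum>s\<in>I'. w s * X s \<omega>)
      (\<lambda>x. ennreal (normal_density (\<Sum>s\<in>I'. 0) (sqrt (\<Sum>s\<in>I'. (\<bar>w s\<bar> * sd s)\<^sup>2)) x))"
    using pos I' by (intro sum_indep_normal) (auto simp: I'_def)
  moreover have "(\<lambda>\<omega>. \<Sum>s\<in>I'. w s * X s \<omega>) = (\<lambda>\<omega>. \<Sum>s\<in>I. w s * X s \<omega>)"
    using fin by (intro ext sum.mono_neutral_left) (auto simp: I'_def)
  moreover have "(\<Sum>s\<in>I'. (\<bar>w s\<bar> * sd s)\<^sup>2) = (\<Sum>s\<in>I. (w s * sd s)\<^sup>2)"
    using fin by (simp add: power_mult_distrib, intro sum.mono_neutral_left) (auto simp: I'_def)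
  ultimately show ?thesis by simp
qed

lemma (in prob_space) indep_vars_slice:
  assumes "indep_vars (\<lambda>_. borel) V (I \<times> J)" and "c \<in> J"
  shows "indep_vars (\<lambda>_. borel) (\<lambda>s. V (s, c)) I"
proof -
  have "indep_vars (\<lambda>s. PiM {(s, c)} (\<lambda>_. borel)) (\<lambda>s \<omega>. restrict (\<lambda>p. V p \<omega>) {(s, c)}) I"
    using assms by (intro indep_vars_restrict) (auto simp: disjoint_family_on_def)
  then have "indep_vars (\<lambda>_. borel) (\<lambda>s \<omega>. restrict (\<lambda>p. V p \<omega>) {(s, c)} (s, c)) I"
    by (rule indep_vars_compose2) (rule measurable_component_singleton, simp)
  then show ?thesis by simp
qed

lemma (in prob_space) indep_vars_weighted_column_sums:
  fixes V :: "'s \<times> 'c \<Rightarrow> 'a \<Rightarrow> real"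
  assumes "indep_vars (\<lambda>_. borel) V (I \<times> J)" and "finite I"
  shows "indep_vars (\<lambda>_. borel) (\<lambda>c \<omega>. \<Sum>s\<in>I. w s * V (s, c) \<omega>) J"
proof -
  have "indep_vars (\<lambda>c. PiM (I \<times> {c}) (\<lambda>_. borel)) (\<lambda>c \<omega>. restrict (\<lambda>p. V p \<omega>) (I \<times> {c})) J"
    using assms by (intro indep_vars_restrict) (auto simp: disjoint_family_on_def)
  then have "indep_vars (\<lambda>_. borel) (\<lambda>c \<omega>. \<Sum>s\<in>I. w s * restrict (\<lambda>p. V p \<omega>) (I \<times> {c}) (s, c)) J"
  proof (rule indep_vars_compose2[where Y = "\<lambda>c g. \<Sum>s\<in>I. w s * g (s, c)"])
    fix c :: 'c
    show "(\<lambda>g. \<Sum>s\<in>I. w s * g (s, c)) \<in> borel_measurable (PiM (I \<times> {c}) (\<lambda>_. borel))"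
      by (intro borel_measurable_sum borel_measurable_times measurable_const
          measurable_component_singleton[where M = "\<lambda>_. borel", simplified]) auto
  qed
  then show ?thesis by simp
qed

lemma (in prob_space) scaled_chi2_distributed_norm_gaussian:
  fixes V :: "'s \<times> 'd::finite \<Rightarrow> 'a \<Rightarrow> real" and Y :: "'a \<Rightarrow> real^'d"
  assumes fin: "finite I" and indep: "indep_vars (\<lambda>_. borel) V (I \<times> UNIV)"
    and pos: "\<And>s. s \<in> I \<Longrightarrow> 0 < sd s"
    and normal: "\<And>s c. s \<in> I \<Longrightarrow> distributed M lborel (V (s, c)) (\<lambda>x. ennreal (normal_density 0 (sd s) x))"
    and nonzero: "s' \<in> I" "w s' \<noteq> 0"
    and Y: "\<And>\<omega> c. Y \<omega> $ c = (\<Sum>s\<in>I. w s * V (s, c) \<omega>)"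
  shows "scaled_chi2_distributed M (\<lambda>\<omega>. (norm (Y \<omega>))\<^sup>2) (\<Sum>s\<in>I. (w s * sd s)\<^sup>2) CARD('d)"
proof -
  define \<alpha> where "\<alpha> = (\<Sum>s\<in>I. (w s * sd s)\<^sup>2)"
  have "0 < (w s' * sd s')\<^sup>2"
    using nonzero pos[OF nonzero(1)] by simp
  then have \<alpha>: "0 < \<alpha>"
    unfolding \<alpha>_def using fin nonzero by (intro sum_pos2) auto
  define Z where "Z = (\<lambda>c \<omega>. Y \<omega> $ c / sqrt \<alpha>)"
  have "indep_vars (\<lambda>_. borel) (\<lambda>c \<omega>. \<Sum>s\<in>I. w s * V (s, c) \<omega>) UNIV"
    by (rule indep_vars_weighted_column_sums[OF indep fin])
  then have "indep_vars (\<lambda>_. borel) Z UNIV"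
    unfolding Z_def Y by (rule indep_vars_compose2[where Y = "\<lambda>_ x. x / sqrt \<alpha>", simplified]) simp
  moreover have "distributed M lborel (Z c) (\<lambda>x. ennreal (std_normal_density x))" for c
  proof -
    have "distributed M lborel (\<lambda>\<omega>. \<Sum>s\<in>I. w s * V (s, c) \<omega>) (\<lambda>x. ennreal (normal_density 0 (sqrt \<alpha>) x))"
      unfolding \<alpha>_def
      by (rule normal_distributed_weighted_sum[where X = "\<lambda>s. V (s, c)" and w = w and sd = sd,
            OF fin indep_vars_slice[OF indep UNIV_I] pos normal nonzero])
    then have "distributed M lborel (\<lambda>\<omega>. ((\<Sum>s\<in>I. w s * V (s, c) \<omega>) - 0) / sqrt \<alpha>)
        (\<lambda>x. ennreal (std_normal_density x))"
      using normal_standard_normal_convert[of "sqrt \<alpha>"] \<alpha> by simp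
    then show ?thesis
      by (simp add: Z_def Y)
  qed
  ultimately have "distributed M lborel (\<lambda>\<omega>. \<Sum>c\<in>UNIV. (Z c \<omega>)\<^sup>2) (\<lambda>x. ennreal (chi2_density CARD('d) x))"
    by (intro chi2_distributed_sum_squares) auto
  moreover have "(norm (Y \<omega>))\<^sup>2 / \<alpha> = (\<Sum>c\<in>UNIV. (Z c \<omega>)\<^sup>2)" for \<omega>
    using \<alpha> by (simp add: Z_def norm_vec_def L2_set_def sum_nonneg power_divide sum_divide_distrib)
  ultimately show ?thesis
    unfolding scaled_chi2_distributed_def \<alpha>_def[symmetric] by simp
qed

section \<open>Distance to the opposite centroid\<close>

lemma obs_minus_centroid:
  fixes mu xi :: "nat \<Rightarrow> 'a \<Rightarrow> real^'d"
  assumes "finite C" "C \<noteq> {}" and "z i = l" and labels: "\<And>k. k \<in> C \<Longrightarrow> z k = l \<or> z k = l'"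
  shows "obs mu xi z i \<omega> - centroid mu xi z C \<omega> =
    (1 - real (card (C \<inter> {k. z k = l})) / real (card C)) *\<^sub>R (mu l \<omega> - mu l' \<omega>) +
    xi i \<omega> - (1 / real (card C)) *\<^sub>R (\<Sum>k\<in>C. xi k \<omega>)"
proof -
  define A B where "A = real (card (C \<inter> {k. z k = l}))" and "B = real (card (C - {k. z k = l}))"
  have "(\<Sum>k\<in>C. mu (z k) \<omega>) = (\<Sum>k\<in>C \<inter> {k. z k = l}. mu (z k) \<omega>) + (\<Sum>k\<in>C - {k. z k = l}. mu (z k) \<omega>)"
    by (rule sum.Int_Diff[OF \<open>finite C\<close>])
  also have "\<dots> = (\<Sum>k\<in>C \<inter> {k. z k = l}. mu l \<omega>) + (\<Sum>k\<in>C - {k. z k = l}. mu l' \<omega>)"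
    using labels by (intro arg_cong2[where f = "(+)"] sum.cong) auto
  finally have mu_sum: "(\<Sum>k\<in>C. mu (z k) \<omega>) = A *\<^sub>R mu l \<omega> + B *\<^sub>R mu l' \<omega>"
    by (simp only: sum_constant_scaleR A_def B_def)
  have "B = real (card C) - A"
    using card_Int_Diff[OF \<open>finite C\<close>, of "{k. z k = l}"] by (simp add: A_def B_def)
  with mu_sum have mu_sum': "(\<Sum>k\<in>C. mu (z k) \<omega>) = A *\<^sub>R mu l \<omega> + (real (card C) - A) *\<^sub>R mu l' \<omega>"
    by simp
  have "card C \<noteq> 0"
    using assms(1,2) by simp
  then show ?thesis
    unfolding A_def[symmetric] obs_def centroid_def sum.distrib mu_sum' using \<open>z i = l\<close>
    by (simp add: vec_eq_iff field_simps ring_distribs)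
qed

text \<open>The coefficient of mu_k (index Inl k) and of xi_k (index Inr k) in x_i minus the
  centroid of C, when i has label l and a fraction R of C has label l.\<close>

definition residual_weight :: "nat \<Rightarrow> nat \<Rightarrow> nat set \<Rightarrow> real \<Rightarrow> nat + nat \<Rightarrow> real" where
  "residual_weight l i C R s = (case s of
      Inl k \<Rightarrow> if k = l then 1 - R else R - 1
    | Inr k \<Rightarrow> (if k = i then 1 else 0) - (if k \<in> C then 1 / real (card C) else 0))"

lemma sum_residual_weight:
  assumes "l \<in> {1, 2}" "i \<in> {1..n}" "C \<subseteq> {1..n}"
  shows "(\<Sum>s\<in>{1, 2} <+> {1..n}. residual_weight l i C R s * (case s of Inl k \<Rightarrow> a k | Inr k \<Rightarrow> b k)) =
    (1 - R) * (a l - a (3 - l)) + b i - (1 / real (card C)) * (\<Sum>k\<in>C. b k)"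
proof -
  have "(\<Sum>k\<in>{1, 2}. residual_weight l i C R (Inl k) * a k) = (1 - R) * (a l - a (3 - l))"
    using assms(1) by (auto simp: residual_weight_def algebra_simps)
  moreover have "(\<Sum>k\<in>{1..n}. residual_weight l i C R (Inr k) * b k) =
      b i - (\<Sum>k\<in>{1..n} \<inter> C. b k / real (card C))"
    using assms(2) by (simp add: residual_weight_def left_diff_distrib sum_subtractf sum.inter_restrict
        if_distrib[where f = "\<lambda>x. x * _"] cong: if_cong)
  moreover have "{1..n} \<inter> C = C"
    using assms(3) by blast
  ultimately show ?thesis
    by (simp add: sum.Plus comp_def sum_divide_distrib[symmetric])
qed

lemma sum_residual_weight_sq:
  assumes "l \<in> {1, 2}" "i \<in> {1..n}" "C \<subseteq> {1..n}" "i \<notin> C"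
  shows "(\<Sum>s\<in>{1, 2} <+> {1..n}. (residual_weight l i C R s * (case s of Inl _ \<Rightarrow> \<tau> | Inr _ \<Rightarrow> \<sigma>))\<^sup>2) =
    2 * \<tau>\<^sup>2 * (1 - R)\<^sup>2 + (1 + 1 / real (card C)) * \<sigma>\<^sup>2"
proof -
  have "(\<Sum>s\<in>{1, 2} <+> {1..n}. (residual_weight l i C R s * (case s of Inl _ \<Rightarrow> \<tau> | Inr _ \<Rightarrow> \<sigma>))\<^sup>2) =
      (\<Sum>k\<in>{1, 2}. (residual_weight l i C R (Inl k) * \<tau>)\<^sup>2) +
      (\<Sum>k\<in>{1..n}. (residual_weight l i C R (Inr k) * \<sigma>)\<^sup>2)"
    by (simp add: sum.Plus comp_def)
  also have "(\<Sum>k\<in>{1, 2}. (residual_weight l i C R (Inl k) * \<tau>)\<^sup>2) = 2 * \<tau>\<^sup>2 * (1 - R)\<^sup>2"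
    using assms(1) by (auto simp: residual_weight_def power_mult_distrib power2_commute)
  also have "(residual_weight l i C R (Inr k) * \<sigma>)\<^sup>2 =
      \<sigma>\<^sup>2 * ((if k = i then 1 else 0) + (if k \<in> C then 1 / (real (card C))\<^sup>2 else 0))" for k
    using assms(4) by (auto simp: residual_weight_def power_mult_distrib power_divide)
  then have "(\<Sum>k\<in>{1..n}. (residual_weight l i C R (Inr k) * \<sigma>)\<^sup>2) =
      \<sigma>\<^sup>2 * (1 + real (card ({1..n} \<inter> C)) / (real (card C))\<^sup>2)"
    using assms(2) by (simp add: sum_distrib_left[symmetric] sum.distrib sum.inter_restrict[symmetric])
  also have "{1..n} \<inter> C = C"
    using assms(3) by blast
  finally show ?thesis
    by (simp add: power2_eq_square field_simps)
qed

lemma obs_minus_centroid_component: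
  fixes mu xi :: "nat \<Rightarrow> 'a \<Rightarrow> real^'d"
  assumes labels: "\<forall>k\<in>{1..n}. z k \<in> {1, 2}"
    and C: "C \<subseteq> {1..n}" "C \<noteq> {}" and "i \<in> {1..n}" "z i = l"
  defines "R \<equiv> real (card (C \<inter> {k\<in>{1..n}. z k = l})) / real (card C)"
  shows "(obs mu xi z i \<omega> - centroid mu xi z C \<omega>) $ c =
    (\<Sum>s\<in>{1, 2} <+> {1..n}. residual_weight l i C R s *
      (case s of Inl k \<Rightarrow> mu k \<omega> $ c | Inr k \<Rightarrow> xi k \<omega> $ c))"
proof -
  have l: "l \<in> {1, 2}"
    using labels \<open>i \<in> {1..n}\<close> \<open>z i = l\<close> by auto
  have same_label: "C \<inter> {k\<in>{1..n}. z k = l} = C \<inter> {k. z k = l}"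
    using C(1) by blast
  have "z k = l \<or> z k = 3 - l" if "k \<in> C" for k
    using labels C(1) l that by auto
  then have "obs mu xi z i \<omega> - centroid mu xi z C \<omega> =
      (1 - R) *\<^sub>R (mu l \<omega> - mu (3 - l) \<omega>) + xi i \<omega> - (1 / real (card C)) *\<^sub>R (\<Sum>k\<in>C. xi k \<omega>)"
    unfolding R_def same_label using finite_subset[OF C(1)] C(2) \<open>z i = l\<close> by (intro obs_minus_centroid) auto
  then show ?thesis
    unfolding sum_residual_weight[OF l \<open>i \<in> {1..n}\<close> C(1)] by simp
qed

theorem lemma3p2:
  fixes M :: "'a measure"
    and mu :: "nat \<Rightarrow> 'a \<Rightarrow> real^'d"
    and xi :: "nat \<Rightarrow> 'a \<Rightarrow> real^'d"
    and z :: "nat \<Rightarrow> nat"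
    and C :: "nat \<Rightarrow> nat set"
    and n i j l :: nat
    and \<tau> \<sigma> :: real
  assumes "prob_space M"
    and "n \<ge> 2" and "\<tau> > 0" and "\<sigma> > 0"
    and indep: "prob_space.indep_vars M (\<lambda>_. borel)
        (\<lambda>(s, c) \<omega>. case s of Inl k \<Rightarrow> mu k \<omega> $ c | Inr k \<Rightarrow> xi k \<omega> $ c)
        (({1, 2} <+> {1..n}) \<times> UNIV)"
    and mu_distr: "\<And>k c. k \<in> {1, 2} \<Longrightarrow>
        distributed M lborel (\<lambda>\<omega>. mu k \<omega> $ c) (\<lambda>x. ennreal (normal_density 0 \<tau> x))"
    and xi_distr: "\<And>k c. k \<in> {1..n} \<Longrightarrow>
        distributed M lborel (\<lambda>\<omega>. xi k \<omega> $ c) (\<lambda>x. ennreal (normal_density 0 \<sigma> x))"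
    and labels: "\<forall>k\<in>{1..n}. z k \<in> {1, 2}"
    and S1: "{k\<in>{1..n}. z k = 1} \<noteq> {}"
    and S2: "{k\<in>{1..n}. z k = 2} \<noteq> {}"
    and part: "C 1 \<union> C 2 = {1..n}" "C 1 \<inter> C 2 = {}" "C 1 \<noteq> {}" "C 2 \<noteq> {}"
    and "i \<in> {1..n}" and "j \<in> {1, 2}" and "i \<in> C j" and "l = z i"
  shows "let jb = 3 - j;
             R = real (card (C jb \<inter> {k\<in>{1..n}. z k = l})) / real (card (C jb));
             \<alpha> = 2 * \<tau>\<^sup>2 * (1 - R)\<^sup>2 + (1 + 1 / real (card (C jb))) * \<sigma>\<^sup>2
         in scaled_chi2_distributed M
              (\<lambda>\<omega>. (norm (obs mu xi z i \<omega> - centroid mu xi z (C jb) \<omega>))\<^sup>2) \<alpha> CARD('d)"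
proof -
  interpret prob_space M by fact
  define Cb where "Cb = C (3 - j)"
  define R where "R = real (card (Cb \<inter> {k\<in>{1..n}. z k = l})) / real (card Cb)"
  define V where "V = (\<lambda>(s, c) \<omega>. case s of Inl k \<Rightarrow> mu k \<omega> $ c | Inr k \<Rightarrow> xi k \<omega> $ c)"
  define sd where "sd = (\<lambda>s :: nat + nat. case s of Inl _ \<Rightarrow> \<tau> | Inr _ \<Rightarrow> \<sigma>)"
  let ?I = "{1, 2} <+> {1..n}" and ?w = "residual_weight l i Cb R"
  have Cb: "Cb \<subseteq> {1..n}" "Cb \<noteq> {}" "i \<notin> Cb"
    using part \<open>j \<in> {1, 2}\<close> \<open>i \<in> C j\<close> by (auto simp: Cb_def)
  have "scaled_chi2_distributed M (\<lambda>\<omega>. (norm (obs mu xi z i \<omega> - centroid mu xi z Cb \<omega>))\<^sup>2)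
      (\<Sum>s\<in>?I. (?w s * sd s)\<^sup>2) CARD('d)"
  proof (rule scaled_chi2_distributed_norm_gaussian[where V = V and s' = "Inr i"])
    show "(obs mu xi z i \<omega> - centroid mu xi z Cb \<omega>) $ c = (\<Sum>s\<in>?I. ?w s * V (s, c) \<omega>)" for \<omega> c
      using obs_minus_centroid_component[OF labels Cb(1,2) \<open>i \<in> {1..n}\<close> \<open>l = z i\<close>[symmetric]]
      by (simp add: V_def R_def)
    show "indep_vars (\<lambda>_. borel) V (?I \<times> UNIV)"
      using indep unfolding V_def .
    show "distributed M lborel (V (s, c)) (\<lambda>x. ennreal (normal_density 0 (sd s) x))" if "s \<in> ?I" for s c
      using that mu_distr xi_distr by (auto simp: V_def sd_def)
  qed (use \<open>\<tau> > 0\<close> \<open>\<sigma> > 0\<close> \<open>i \<in> {1..n}\<close> Cb(3) in \<open>auto simp: sd_def residual_weight_def\<close>)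
  moreover have "l \<in> {1, 2}"
    using labels \<open>i \<in> {1..n}\<close> \<open>l = z i\<close> by auto
  ultimately show ?thesis
    unfolding sd_def sum_residual_weight_sq[OF \<open>l \<in> {1, 2}\<close> \<open>i \<in> {1..n}\<close> Cb(1,3)]
    by (simp add: Let_def R_def Cb_def)
qed

end
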